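(* Let $a,c,p\in\mathbb{C}$ with $-c\notin\mathbb{N}\cup\{0\}$ and $c\neq2$. Write $\sinh(pz)M(a,c;z)=\sum_{n=0}^\infty u_nz^n$, $z\in\mathbb{C}$. Then $u_0=0$, $u_1=p$, $u_2=\frac{ap}{c}$, $u_3=\frac{a(a+1)p}{2c(c+1)}+\frac{p^3}{6}$, $u_4=\frac{ap^3}{6c}+\frac{a(a+1)(a+2)p}{6c(c+1)(c+2)}$, $u_5=\frac{a(a+1)p^3}{12c(c+1)}+\frac{a(a+1)(a+2)(a+3)p}{24c(c+1)(c+2)(c+3)}+\frac{p^5}{120}$, and for all integers $n\ge5$, \[ u_{n+1}=\sum_{i=0}^5\beta_i(n)u_{n-i}, \] where, with $D(n)=(c-2)c\,n(n+1)(c+n-1)(c+n)$, \[ \beta_0(n)=\frac{2\left(a\left(c^2-2cn+c-2(n-2)^2\right)+c(n-1)(2c+n-5)\right)}{(c-2)c(n+1)(c+n)}, \] \[ \beta_1(n)=\frac{1}{D(n)}\Big[(n-4)(n-3)(n-2)(n-1)(4p^2-1)+2(n-3)(n-2)(n-1)\big(4a+c(4p^2-3)\big) +(n-2)(n-1)\big(8a^2+a(4c+6)+c(6(c-2)p^2-6c+1)\big) +2(n-1)\big(a^2(4c-2)-3a(c-1)c+(c-2)c(c+1)p^2\big) +(c-2)\big(-a^2(c+2)+ac+c^2(c+1)p^2\big)\Big], \] \[ \beta_2(n)=\frac{1}{D(n)}\Big[2p^2(c-3)\big(a(3c+8)-2c^2+c-32\big)+2p^2\big(n(10a+c(31-3c)-104)-6(c-6)n^2-4n^3\big)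 -2(a+n-3)\big(2a^2-a(c-2n+3)-(n-2)(2c+n-4)\big)\Big], \] \[ \beta_3(n)=-\frac{1}{D(n)}\Big[p^2\big(-12a^2+2a(6c+5)-6c^2+c\big)+2(n-3)\big(a+c(4p^2-3)p^2\big) +(a-1)a+5(c-2)cp^4+(n-4)(n-3)(8p^4-6p^2+1)\Big], \] \[ \beta_4(n)=\frac{2p^2\left(p^2(-6a+5c+4(n-4))+3a-2c-n+4\right)}{D(n)},\qquad \beta_5(n)=\frac{4p^6-5p^4+p^2}{D(n)}. \]
   Context: For $a\in\mathbb{C}$, $(a)_n=a(a+1)\cdots(a+n-1)$ denotes the Pochhammer symbol, with $(a)_0=1$. For $a,c\in\mathbb{C}$ with $-c\notin\mathbb{N}\cup\{0\}$, the confluent hypergeometric (Kummer) function is $M(a,c;z)=\sum_{n=0}^\infty \frac{(a)_n}{(c)_n\,n!}z^n$, $z\in\mathbb{C}$. *)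

theory Defs
  imports "HOL-Analysis.Analysis"
begin

definition kummerM :: "complex \<Rightarrow> complex \<Rightarrow> complex \<Rightarrow> complex" where
  "kummerM a c z = (\<Sum>n. pochhammer a n / (pochhammer c n * fact n) * z ^ n)"

definition Dn :: "complex \<Rightarrow> complex \<Rightarrow> complex" where
  "Dn c n = (c - 2) * c * n * (n + 1) * (c + n - 1) * (c + n)"

definition beta0 :: "complex \<Rightarrow> complex \<Rightarrow> complex \<Rightarrow> complex \<Rightarrow> complex" where
  "beta0 a c p n = 2 * (a * (c^2 - 2*c*n + c - 2*(n - 2)^2) + c*(n - 1)*(2*c + n - 5))
      / ((c - 2) * c * (n + 1) * (c + n))"

definition beta1 :: "complex \<Rightarrow> complex \<Rightarrow> complex \<Rightarrow> complex \<Rightarrow> complex" where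
  "beta1 a c p n = ((n - 4)*(n - 3)*(n - 2)*(n - 1)*(4*p^2 - 1)
      + 2*(n - 3)*(n - 2)*(n - 1)*(4*a + c*(4*p^2 - 3))
      + (n - 2)*(n - 1)*(8*a^2 + a*(4*c + 6) + c*(6*(c - 2)*p^2 - 6*c + 1))
      + 2*(n - 1)*(a^2*(4*c - 2) - 3*a*(c - 1)*c + (c - 2)*c*(c + 1)*p^2)
      + (c - 2)*(- (a^2*(c + 2)) + a*c + c^2*(c + 1)*p^2)) / Dn c n"

definition beta2 :: "complex \<Rightarrow> complex \<Rightarrow> complex \<Rightarrow> complex \<Rightarrow> complex" where
  "beta2 a c p n = (2*p^2*(c - 3)*(a*(3*c + 8) - 2*c^2 + c - 32)
      + 2*p^2*(n*(10*a + c*(31 - 3*c) - 104) - 6*(c - 6)*n^2 - 4*n^3)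
      - 2*(a + n - 3)*(2*a^2 - a*(c - 2*n + 3) - (n - 2)*(2*c + n - 4))) / Dn c n"

definition beta3 :: "complex \<Rightarrow> complex \<Rightarrow> complex \<Rightarrow> complex \<Rightarrow> complex" where
  "beta3 a c p n = - ((p^2*(-12*a^2 + 2*a*(6*c + 5) - 6*c^2 + c)
      + 2*(n - 3)*(a + c*(4*p^2 - 3)*p^2)
      + (a - 1)*a + 5*(c - 2)*c*p^4 + (n - 4)*(n - 3)*(8*p^4 - 6*p^2 + 1)) / Dn c n)"

definition beta4 :: "complex \<Rightarrow> complex \<Rightarrow> complex \<Rightarrow> complex \<Rightarrow> complex" where
  "beta4 a c p n = 2*p^2*(p^2*(-6*a + 5*c + 4*(n - 4)) + 3*a - 2*c - n + 4) / Dn c n"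

definition beta5 :: "complex \<Rightarrow> complex \<Rightarrow> complex \<Rightarrow> complex \<Rightarrow> complex" where
  "beta5 a c p n = (4*p^6 - 5*p^4 + p^2) / Dn c n"

end

theory Submission
  imports Defs "HOL-Complex_Analysis.Laurent_Convergence" "HOL-Real_Asymp.Real_Asymp"
begin

(* Write sinh(pz) M(a,c;z) = (G_p(z) - G_{-p}(z)) / 2 with G_q(z) = e^{qz} M(a,c;z).
   Kummer's equation z M'' + (c - z) M' - a M = 0 becomes a second-order equation for G_q,
   so the Taylor coefficients of G_q obey a three-term recurrence.  The six-term recurrence
   with coefficients beta_i is an explicit combination of five consecutive shifts of it, and
   since the beta_i depend on q only through q^2 it holds for G_p and G_{-p} alike, hence
   for their difference. *)

lemma add_of_nat_neq_0:
  fixes c :: "'a::ring_1"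
  assumes "\<forall>k::nat. c \<noteq> - of_nat k"
  shows "c + of_nat n \<noteq> 0"
  using assms by (simp add: add_eq_0_iff2)

lemma fps_hypergeo_kummer_Suc:
  fixes a c :: "'a::field_char_0"
  assumes "\<forall>k::nat. c \<noteq> - of_nat k"
  shows "(of_nat n + 1) * (c + of_nat n) * fps_nth (fps_hypergeo [a] [c] 1) (Suc n)
           = (a + of_nat n) * fps_nth (fps_hypergeo [a] [c] 1) n"
proof -
  let ?M = "fps_hypergeo [a] [c] (1::'a)"
  have nz: "(of_nat n + 1) * (c + of_nat n) \<noteq> (0::'a)"
    using add_of_nat_neq_0[OF assms, of n] of_nat_neq_0[of n, where ?'a='a] by (simp add: add.commute)
  have "fps_nth ?M (Suc n) = ((a + of_nat n) * pochhammer a n)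
          / (((of_nat n + 1) * (c + of_nat n)) * (pochhammer c n * fact n))"
    by (simp add: pochhammer_rec' algebra_simps)
  then show ?thesis
    using nz by simp
qed

lemma fps_hypergeo_kummer_ode:
  fixes a c :: "'a::field_char_0"
  assumes hc: "\<forall>k::nat. c \<noteq> - of_nat k"
  defines "M \<equiv> fps_hypergeo [a] [c] 1"
  shows "fps_X * fps_deriv (fps_deriv M) + fps_const c * fps_deriv M - fps_X * fps_deriv M
           - fps_const a * M = 0"
proof (rule fps_ext)
  fix n
  have "fps_nth (fps_X * fps_deriv (fps_deriv M) + fps_const c * fps_deriv M - fps_X * fps_deriv M
           - fps_const a * M) n
        = (of_nat n + 1) * (c + of_nat n) * fps_nth M (Suc n) - (a + of_nat n) * fps_nth M n"
    by (cases n) (simp_all add: algebra_simps)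
  also have "\<dots> = 0"
    using fps_hypergeo_kummer_Suc[OF hc, of n a] unfolding M_def by (simp del: fps_hypergeo_nth)
  finally show "fps_nth (fps_X * fps_deriv (fps_deriv M) + fps_const c * fps_deriv M
      - fps_X * fps_deriv M - fps_const a * M) n = fps_nth 0 n"
    by simp
qed

lemma fps_exp_mult_kummer_ode:
  fixes a c q :: "'a::field_char_0"
  assumes hc: "\<forall>k::nat. c \<noteq> - of_nat k"
  defines "G \<equiv> fps_exp q * fps_hypergeo [a] [c] 1"
  shows "fps_X * fps_deriv (fps_deriv G) + fps_const c * fps_deriv G
           - fps_const (2*q + 1) * (fps_X * fps_deriv G) + fps_const (q*(q + 1)) * (fps_X * G)
           - fps_const (q*c + a) * G = 0"
proof -
  define E where "E = fps_exp q"
  define M where "M = fps_hypergeo [a] [c] (1::'a)"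
  have dE: "fps_deriv E = fps_const q * E"
    by (simp add: E_def)
  have "fps_X * fps_deriv (fps_deriv G) + fps_const c * fps_deriv G
           - fps_const (2*q + 1) * (fps_X * fps_deriv G) + fps_const (q*(q + 1)) * (fps_X * G)
           - fps_const (q*c + a) * G
        = E * (fps_X * fps_deriv (fps_deriv M) + fps_const c * fps_deriv M - fps_X * fps_deriv M
           - fps_const a * M)"
    unfolding G_def E_def[symmetric] M_def[symmetric]
    by (simp add: dE algebra_simps flip: fps_const_add fps_const_mult fps_numeral_fps_const)
  also have "\<dots> = 0"
    using fps_hypergeo_kummer_ode[OF hc] by (simp add: M_def)
  finally show ?thesis .
qed

definition exp_kummer_defect :: "'a::comm_ring_1 \<Rightarrow> 'a \<Rightarrow> 'a \<Rightarrow> 'a \<Rightarrow> 'a \<Rightarrow> 'a \<Rightarrow> 'a \<Rightarrow> 'a" where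
  "exp_kummer_defect a c q x g_next g g_prev =
     (x + 1) * (x + c) * g_next - ((2*q + 1) * x + q*c + a) * g + q * (q + 1) * g_prev"

lemma fps_exp_mult_kummer_defect:
  fixes a c q :: "'a::field_char_0"
  assumes hc: "\<forall>k::nat. c \<noteq> - of_nat k"
  defines "G \<equiv> fps_exp q * fps_hypergeo [a] [c] 1"
  shows "exp_kummer_defect a c q (of_nat (Suc k)) (fps_nth G (k + 2)) (fps_nth G (k + 1)) (fps_nth G k) = 0"
proof -
  have "fps_nth (fps_X * fps_deriv (fps_deriv G) + fps_const c * fps_deriv G
           - fps_const (2*q + 1) * (fps_X * fps_deriv G) + fps_const (q*(q + 1)) * (fps_X * G)
           - fps_const (q*c + a) * G) (Suc k) = 0"
    using fps_exp_mult_kummer_ode[OF hc, of q a] by (simp add: G_def)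
  then show ?thesis
    by (simp add: exp_kummer_defect_def algebra_simps)
qed

lemma kummer_ratio_tendsto_zero:
  fixes a c z :: complex
  shows "(\<lambda>n. (a + of_nat n) * z / ((of_nat n + 1) * (c + of_nat n))) \<longlonglongrightarrow> 0"
proof (rule Lim_null_comparison)
  have "eventually (\<lambda>n. real n > norm c) sequentially"
    using filterlim_real_sequentially unfolding filterlim_at_top_dense by blast
  then show "eventually (\<lambda>n. norm ((a + of_nat n) * z / ((of_nat n + 1) * (c + of_nat n)))
      \<le> (norm a + real n) * norm z / ((real n + 1) * (real n - norm c))) sequentially"
  proof (rule eventually_mono)
    fix n assume n: "real n > norm c"
    have "norm (a + of_nat n) \<le> norm a + real n"
      using norm_triangle_ineq[of a "of_nat n"] by simp
    moreover have "real n - norm c \<le> norm (c + of_nat n)"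
      using norm_triangle_ineq2[of "of_nat n" "- c"] by (simp add: add.commute)
    moreover have "norm (of_nat n + 1 :: complex) = real n + 1"
      by (metis norm_of_nat of_nat_Suc add.commute)
    ultimately show "norm ((a + of_nat n) * z / ((of_nat n + 1) * (c + of_nat n)))
      \<le> (norm a + real n) * norm z / ((real n + 1) * (real n - norm c))"
      using n by (simp add: norm_mult norm_divide frac_le mult_right_mono mult_left_mono)
  qed
  show "(\<lambda>n. (norm a + real n) * norm z / ((real n + 1) * (real n - norm c))) \<longlonglongrightarrow> 0"
    by real_asymp
qed

lemma summable_kummer_series:
  fixes a c z :: complex
  shows "summable (\<lambda>n. fps_nth (fps_hypergeo [a] [c] 1) n * z ^ n)"
proof -
  let ?r = "\<lambda>n. (a + of_nat n) * z / ((of_nat n + 1) * (c + of_nat n))"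
  have "eventually (\<lambda>n. norm (?r n) < 1/2) sequentially"
    using tendsto_norm_zero[OF kummer_ratio_tendsto_zero] by (rule order_tendstoD) simp
  then obtain N where N: "\<And>n. n \<ge> N \<Longrightarrow> norm (?r n) < 1/2"
    unfolding eventually_sequentially by blast
  have step: "fps_nth (fps_hypergeo [a] [c] 1) (Suc n) * z ^ Suc n
                = ?r n * (fps_nth (fps_hypergeo [a] [c] 1) n * z ^ n)" for n
    by (subst fps_hypergeo_rec) (simp del: fps_hypergeo_nth add: field_simps)
  show ?thesis
  proof (rule summable_ratio_test[of "1/2" N])
    fix n assume "n \<ge> N"
    then show "norm (fps_nth (fps_hypergeo [a] [c] 1) (Suc n) * z ^ Suc n)
                 \<le> 1/2 * norm (fps_nth (fps_hypergeo [a] [c] 1) n * z ^ n)"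
      unfolding step norm_mult[of "?r n"] using N by (intro mult_right_mono) (simp_all add: less_imp_le)
  qed simp
qed

(* No condition on c is needed: where pochhammer c n = 0, both sides use the junk value x / 0 = 0. *)
lemma kummerM_has_fps_expansion: "kummerM a c has_fps_expansion fps_hypergeo [a] [c] 1"
  unfolding has_fps_expansion_def
proof
  show "0 < fps_conv_radius (fps_hypergeo [a] [c] 1)"
    unfolding fps_conv_radius_def using conv_radius_inftyI''[OF summable_kummer_series] by simp
  show "eventually (\<lambda>z. eval_fps (fps_hypergeo [a] [c] 1) z = kummerM a c z) (nhds 0)"
    by (intro always_eventually allI) (simp add: eval_fps_def kummerM_def)
qed

lemma sinh_has_fps_expansion:
  fixes p :: "'a::{banach, real_normed_field}"
  shows "(\<lambda>z. sinh (p * z)) has_fps_expansion fps_const (1/2) * (fps_exp p - fps_exp (-p))"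
proof -
  have "(\<lambda>z. sinh (p * z)) = (\<lambda>z. 1/2 * (exp (p * z) - exp ((-p) * z)))"
    by (simp add: sinh_def scaleR_conv_of_real)
  then show ?thesis
    by (simp only:) (intro has_fps_expansion_cmult_left has_fps_expansion_diff has_fps_expansion_exp)
qed

lemma sinh_mult_kummerM_coeffs:
  fixes a c p :: complex and u :: "nat \<Rightarrow> complex"
  assumes "\<forall>z. (\<lambda>n. u n * z ^ n) sums (sinh (p * z) * kummerM a c z)"
  shows "Abs_fps u = fps_const (1/2) * (fps_exp p - fps_exp (-p)) * fps_hypergeo [a] [c] 1"
proof (rule fps_expansion_unique_complex)
  show "(\<lambda>z. sinh (p * z) * kummerM a c z) has_fps_expansion Abs_fps u"
    unfolding has_fps_expansion_def
  proof
    show "0 < fps_conv_radius (Abs_fps u)"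
      unfolding fps_conv_radius_def using assms conv_radius_inftyI''[of u] sums_summable by fastforce
    show "eventually (\<lambda>z. eval_fps (Abs_fps u) z = sinh (p * z) * kummerM a c z) (nhds 0)"
      using assms by (intro always_eventually allI) (simp add: eval_fps_def sums_iff)
  qed
  show "(\<lambda>z. sinh (p * z) * kummerM a c z)
          has_fps_expansion fps_const (1/2) * (fps_exp p - fps_exp (-p)) * fps_hypergeo [a] [c] 1"
    by (intro has_fps_expansion_mult sinh_has_fps_expansion kummerM_has_fps_expansion)
qed

lemma sinh_mult_kummer_fps_initial:
  fixes a c p :: complex
  assumes hc: "\<forall>k::nat. c \<noteq> - of_nat k"
  defines "S \<equiv> fps_const (1/2) * (fps_exp p - fps_exp (-p)) * fps_hypergeo [a] [c] 1"
  shows "fps_nth S 0 = 0 \<and>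
    fps_nth S 1 = p \<and>
    fps_nth S 2 = a * p / c \<and>
    fps_nth S 3 = a*(a + 1)*p / (2*c*(c + 1)) + p^3 / 6 \<and>
    fps_nth S 4 = a*p^3 / (6*c) + a*(a + 1)*(a + 2)*p / (6*c*(c + 1)*(c + 2)) \<and>
    fps_nth S 5 = a*(a + 1)*p^3 / (12*c*(c + 1))
             + a*(a + 1)*(a + 2)*(a + 3)*p / (24*c*(c + 1)*(c + 2)*(c + 3)) + p^5 / 120"
proof -
  let ?m = "fps_nth (fps_hypergeo [a] [c] (1::complex))"
  have S: "fps_nth S k = (\<Sum>i=0..k. (1/2) * (p^i / fact i - (-p)^i / fact i) * ?m (k - i))" for k
    unfolding S_def fps_mult_nth[of "fps_const (1/2) * (fps_exp p - fps_exp (-p))"]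
    by (simp add: algebra_simps)
  have coeffs: "fps_nth S 0 = 0" "fps_nth S 1 = p * ?m 0" "fps_nth S 2 = p * ?m 1"
    "fps_nth S 3 = p * ?m 2 + p^3 / 6 * ?m 0" "fps_nth S 4 = p * ?m 3 + p^3 / 6 * ?m 1"
    "fps_nth S 5 = p * ?m 4 + p^3 / 6 * ?m 2 + p^5 / 120 * ?m 0"
    by (simp_all del: fps_hypergeo_nth add: S eval_nat_numeral)
  have nz: "c \<noteq> 0" "c + 1 \<noteq> 0" "c + 2 \<noteq> 0" "c + 3 \<noteq> 0"
    using add_of_nat_neq_0[OF hc, of 0] add_of_nat_neq_0[OF hc, of 1]
      add_of_nat_neq_0[OF hc, of 2] add_of_nat_neq_0[OF hc, of 3] by simp_all
  then have kummer: "?m 0 = 1" "?m 1 = a / c" "?m 2 = a*(a + 1) / (2*c*(c + 1))"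
    "?m 3 = a*(a + 1)*(a + 2) / (6*c*(c + 1)*(c + 2))"
    "?m 4 = a*(a + 1)*(a + 2)*(a + 3) / (24*c*(c + 1)*(c + 2)*(c + 3))"
    by (simp_all add: eval_nat_numeral pochhammer_Suc field_simps)
  show ?thesis
    unfolding coeffs kummer using nz by (simp add: field_simps)
qed

(* The multipliers of the five shifted defects were found by linear algebra over Q(a,c,q,x);
   Dn c x is a common denominator of the beta_i. *)
lemma beta_recurrence_certificate:
  fixes a c q x G0 G1 G2 G3 G4 G5 G6 :: complex
  assumes "Dn c x \<noteq> 0"
  shows "Dn c x * (G0 - (beta0 a c q x * G1 + beta1 a c q x * G2 + beta2 a c q x * G3
            + beta3 a c q x * G4 + beta4 a c q x * G5 + beta5 a c q x * G6))
   = (x^2*c^2 - 2*x^2*c + x*c^3 - 3*x*c^2 + 2*x*c) * exp_kummer_defect a c q x G0 G1 G2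
   + (4*x^2*a - 2*x^2*c + 4*x*a*c - 16*x*a + 2*x*c^2*q - 3*x*c^2 - 4*x*c*q + 10*x*c - a*c^2
       - 4*a*c + 16*a + c^3*q - 2*c^2*q + 4*c^2 - 10*c)
       * exp_kummer_defect a c q (x - 1) G1 G2 G3
   + (- 4*x^2*q^2 + x^2 + 8*x*a*q - 4*x*a - 4*x*c*q^2 - 4*x*c*q + 3*x*c + 28*x*q^2 - 7*x
       - 4*a^2 + 4*a*c*q + 2*a*c - 16*a*q + 10*a + c^2*q^2 - 3*c^2*q + 10*c*q^2 + 10*c*q - 8*c
       - 48*q^2 + 12)
       * exp_kummer_defect a c q (x - 2) G2 G3 G4
   + (- 8*x*q^3 + 4*x*q^2 + 2*x*q - x + 8*a*q^2 - 4*a*q - a - 4*c*q^3 - 2*c*q^2 + 3*c*q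
       + 32*q^3 - 16*q^2 - 8*q + 4)
       * exp_kummer_defect a c q (x - 3) G3 G4 G5
   + (- 4*q^4 + 4*q^3 + q^2 - q) * exp_kummer_defect a c q (x - 4) G4 G5 G6"
    (is "_ = ?rhs")
proof -
  define Q where "Q = (c - 2) * c * (x + 1) * (c + x)"
  have D: "Dn c x = Q * (x * (c + x - 1))"
    unfolding Dn_def Q_def by (simp add: algebra_simps)
  with assms have "Q \<noteq> 0" by auto
  have "Dn c x * (G0 - (beta0 a c q x * G1 + beta1 a c q x * G2 + beta2 a c q x * G3
            + beta3 a c q x * G4 + beta4 a c q x * G5 + beta5 a c q x * G6))
    = Dn c x * G0 - (Dn c x * beta0 a c q x * G1 + Dn c x * beta1 a c q x * G2
        + Dn c x * beta2 a c q x * G3 + Dn c x * beta3 a c q x * G4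
        + Dn c x * beta4 a c q x * G5 + Dn c x * beta5 a c q x * G6)"
    by (simp add: algebra_simps)
  also have "\<dots> = ?rhs"
    unfolding beta0_def Q_def[symmetric] beta1_def beta2_def beta3_def beta4_def beta5_def
    using assms \<open>Q \<noteq> 0\<close>
    by (simp add: D) (unfold Q_def exp_kummer_defect_def, algebra)
  finally show ?thesis .
qed

lemma Dn_of_nat_neq_0:
  assumes hc: "\<forall>k::nat. c \<noteq> - of_nat k" and "c \<noteq> 2" and "n > 0"
  shows "Dn c (of_nat n) \<noteq> 0"
proof -
  have "c + of_nat n \<noteq> 1"
    using hc[rule_format, of "n - 1"] \<open>n > 0\<close> by (auto simp: of_nat_diff algebra_simps)
  then show ?thesis
    using assms add_of_nat_neq_0[OF hc, of 0] add_of_nat_neq_0[OF hc, of n]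
      of_nat_neq_0[of n, where ?'a=complex]
    unfolding Dn_def by (simp add: add.commute)
qed

lemma exp_kummer_six_term_recurrence:
  fixes a c q :: complex and g :: "nat \<Rightarrow> complex"
  assumes hc: "\<forall>k::nat. c \<noteq> - of_nat k" and hc2: "c \<noteq> 2"
    and rec: "\<And>k. exp_kummer_defect a c q (of_nat (Suc k)) (g (k + 2)) (g (k + 1)) (g k) = 0"
    and "n \<ge> 5"
  shows "g (n + 1) = beta0 a c q (of_nat n) * g n + beta1 a c q (of_nat n) * g (n - 1)
           + beta2 a c q (of_nat n) * g (n - 2) + beta3 a c q (of_nat n) * g (n - 3)
           + beta4 a c q (of_nat n) * g (n - 4) + beta5 a c q (of_nat n) * g (n - 5)"
proof -
  have D: "Dn c (of_nat n) \<noteq> 0"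
    using Dn_of_nat_neq_0[OF hc hc2, of n] \<open>n \<ge> 5\<close> by simp
  have "exp_kummer_defect a c q (of_nat n - of_nat j) (g (n + 1 - j)) (g (n - j)) (g (n - j - 1)) = 0"
    if "j \<le> 4" for j
  proof -
    have "Suc (n - j - 1) = n - j" "n - j - 1 + 2 = n + 1 - j" "n - j - 1 + 1 = n - j"
      using that \<open>n \<ge> 5\<close> by auto
    moreover have "of_nat (n - j) = (of_nat n - of_nat j :: complex)"
      using that \<open>n \<ge> 5\<close> by (simp add: of_nat_diff)
    ultimately show ?thesis
      using rec[of "n - j - 1"] by simp
  qed
  from this[of 0] this[of 1] this[of 2] this[of 3] this[of 4]
  have "Dn c (of_nat n) * (g (n + 1) - (beta0 a c q (of_nat n) * g n + beta1 a c q (of_nat n) * g (n - 1)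
           + beta2 a c q (of_nat n) * g (n - 2) + beta3 a c q (of_nat n) * g (n - 3)
           + beta4 a c q (of_nat n) * g (n - 4) + beta5 a c q (of_nat n) * g (n - 5))) = 0"
    unfolding beta_recurrence_certificate[OF D] by (simp add: eval_nat_numeral)
  with D show ?thesis by simp
qed

lemma beta_minus:
  "beta0 a c (-p) x = beta0 a c p x" "beta1 a c (-p) x = beta1 a c p x"
  "beta2 a c (-p) x = beta2 a c p x" "beta3 a c (-p) x = beta3 a c p x"
  "beta4 a c (-p) x = beta4 a c p x" "beta5 a c (-p) x = beta5 a c p x"
  by (simp_all add: beta0_def beta1_def beta2_def beta3_def beta4_def beta5_def)

theorem theorem2p9:
  fixes a c p :: complex and u :: "nat \<Rightarrow> complex"
  assumes hc: "\<forall>k::nat. c \<noteq> - of_nat k"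
    and hc2: "c \<noteq> 2"
    and hu: "\<forall>z::complex. (\<lambda>n. u n * z ^ n) sums (sinh (p * z) * kummerM a c z)"
  shows "u 0 = 0 \<and>
    u 1 = p \<and>
    u 2 = a * p / c \<and>
    u 3 = a*(a + 1)*p / (2*c*(c + 1)) + p^3 / 6 \<and>
    u 4 = a*p^3 / (6*c) + a*(a + 1)*(a + 2)*p / (6*c*(c + 1)*(c + 2)) \<and>
    u 5 = a*(a + 1)*p^3 / (12*c*(c + 1))
             + a*(a + 1)*(a + 2)*(a + 3)*p / (24*c*(c + 1)*(c + 2)*(c + 3)) + p^5 / 120 \<and>
    (\<forall>n::nat. n \<ge> 5 \<longrightarrow>
           u (n + 1) = beta0 a c p (of_nat n) * u n + beta1 a c p (of_nat n) * u (n - 1)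
             + beta2 a c p (of_nat n) * u (n - 2) + beta3 a c p (of_nat n) * u (n - 3)
             + beta4 a c p (of_nat n) * u (n - 4) + beta5 a c p (of_nat n) * u (n - 5))"
proof -
  let ?M = "fps_hypergeo [a] [c] (1::complex)"
  have u: "u n = fps_nth (fps_const (1/2) * (fps_exp p - fps_exp (-p)) * ?M) n" for n
    using arg_cong[OF sinh_mult_kummerM_coeffs[OF hu], of "\<lambda>F. fps_nth F n"] by simp
  have split: "fps_const (1/2) * (fps_exp p - fps_exp (-p)) * ?M
                 = fps_const (1/2) * (fps_exp p * ?M - fps_exp (-p) * ?M)"
    by (simp add: algebra_simps)
  have u_split: "u n = (fps_nth (fps_exp p * ?M) n - fps_nth (fps_exp (-p) * ?M) n) / 2" for n
    unfolding u split by simp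
  note exp_kummer_rec = exp_kummer_six_term_recurrence[OF hc hc2 fps_exp_mult_kummer_defect[OF hc]]
  have "u (n + 1) = beta0 a c p (of_nat n) * u n + beta1 a c p (of_nat n) * u (n - 1)
             + beta2 a c p (of_nat n) * u (n - 2) + beta3 a c p (of_nat n) * u (n - 3)
             + beta4 a c p (of_nat n) * u (n - 4) + beta5 a c p (of_nat n) * u (n - 5)"
    if "n \<ge> 5" for n
    unfolding u_split exp_kummer_rec[OF that] beta_minus by (simp add: field_simps)
  then show ?thesis
    using sinh_mult_kummer_fps_initial[OF hc, of p a, folded u] by blast
qed

end
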